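(* Let $J\in\mathbb R_{\ge0}^{n\times m}$ (entrywise nonnegative), $h\in\mathbb R^n$, $g\in\mathbb R^m$ be arbitrary otherwise, and let $\rho(a)=\log(e^a+e^{-a})$. Define $f:\{\pm1\}^n\to\mathbb R$ by \[ f(x)=\sum_{j=1}^m\rho\Big(\sum_{i=1}^n x_iJ_{ij}+g_j\Big)+h^Tx, \] and write $f(x)=\sum_{T\subseteq[n]}\hat f_T\prod_{i\in T}x_i$ (its unique multilinear expansion). Then for all distinct $i,j\in[n]$, $\hat f_{\{i,j\}}\ge0$; moreover $\hat f_{\{i,j\}}>0$ whenever there exists $k\in[m]$ with $J_{ik}>0$ and $J_{jk}>0$. *)

theory Defs
  imports Complex_Main
begin

text \<open>The Boolean cube {-1,1}^n, points encoded as functions on indices 0..n-1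
  (index i corresponds to the paper's i+1), extended by 0 outside.\<close>
definition hypercube :: "nat \<Rightarrow> (nat \<Rightarrow> real) set" where
  "hypercube n = {x. (\<forall>i<n. x i = 1 \<or> x i = -1) \<and> (\<forall>i\<ge>n. x i = 0)}"

definition fourier_coeffs :: "nat \<Rightarrow> ((nat \<Rightarrow> real) \<Rightarrow> real) \<Rightarrow> nat set \<Rightarrow> real" where
  "fourier_coeffs n f = (THE c. (\<forall>T. \<not> T \<subseteq> {..<n} \<longrightarrow> c T = 0) \<and>
      (\<forall>x\<in>hypercube n. f x = (\<Sum>T\<in>Pow {..<n}. c T * (\<Prod>i\<in>T. x i))))"

definition rho :: "real \<Rightarrow> real" where
  "rho a = ln (exp a + exp (-a))"

end

theory Submission
  imports Defs
begin

text \<open>By Fourier inversion on the cube, the coefficient of \<open>x\<^sub>i x\<^sub>j\<close> is, up to the factor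
  \<open>4 \<cdot> 2\<^sup>n\<close>, the sum over the cube of \<open>x\<^sub>i x\<^sub>j\<close> times the mixed difference of \<open>f\<close> in the
  directions \<open>i\<close> and \<open>j\<close>. The linear part \<open>h\<^sup>T x\<close> has vanishing mixed differences. For the
  \<open>k\<close>-th summand, write its argument as \<open>c + x\<^sub>i J\<^sub>i\<^sub>k + x\<^sub>j J\<^sub>j\<^sub>k\<close>; the weight \<open>x\<^sub>i x\<^sub>j\<close> exactly
  compensates the signs, leaving \<open>\<rho>(c+u+v) - \<rho>(c-u+v) - \<rho>(c+u-v) + \<rho>(c-u-v)\<close> with
  \<open>u = J\<^sub>i\<^sub>k, v = J\<^sub>j\<^sub>k \<ge> 0\<close>. This is nonnegative, and positive if \<open>u, v > 0\<close>, because
  \<open>\<rho>' = tanh\<close> is strictly increasing.\<close>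

definition second_difference :: "(real \<Rightarrow> real) \<Rightarrow> real \<Rightarrow> real \<Rightarrow> real \<Rightarrow> real" where
  "second_difference F c u v = F (c + u + v) - F (c - u + v) - F (c + u - v) + F (c - u - v)"

lemma second_difference_sign_flip:
  fixes s t :: real
  assumes "s = 1 \<or> s = -1" and "t = 1 \<or> t = -1"
  shows "s * t * second_difference F c (s * u) (t * v) = second_difference F c u v"
  using assms by (auto simp: second_difference_def algebra_simps)

lemma second_difference_pos:
  assumes deriv: "\<And>t. (F has_real_derivative F' t) (at t)" and mono: "strict_mono F'"
    and "u > 0" "v > 0"
  shows "second_difference F c u v > 0"
proof -
  define G where "G t = F (t + 2 * v) - F t" for t
  have "G (c - u - v) < G (c + u - v)"
  proof (rule DERIV_pos_imp_increasing[where f = G])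
    show "c - u - v < c + u - v" using \<open>u > 0\<close> by linarith
  next
    fix t
    have "((\<lambda>t. t + 2 * v) has_real_derivative 1) (at t)"
      by (auto intro!: derivative_eq_intros)
    from DERIV_diff[OF DERIV_chain2[OF deriv this] deriv]
    have "(G has_real_derivative F' (t + 2 * v) - F' t) (at t)"
      by (simp add: G_def[abs_def])
    moreover have "F' (t + 2 * v) - F' t > 0"
      using mono \<open>v > 0\<close> by (simp add: strict_mono_less)
    ultimately show "\<exists>y. (G has_real_derivative y) (at t) \<and> 0 < y" by blast
  qed
  then show ?thesis by (simp add: G_def second_difference_def algebra_simps)
qed

lemma second_difference_nonneg:
  assumes "\<And>t. (F has_real_derivative F' t) (at t)" and "strict_mono F'"
    and "u \<ge> 0" "v \<ge> 0"
  shows "second_difference F c u v \<ge> 0"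
  using second_difference_pos[OF assms(1,2), of u v c] assms(3,4)
  by (cases "u = 0 \<or> v = 0") (auto simp: second_difference_def)

lemma rho_has_real_derivative: "(rho has_real_derivative tanh x) (at x)"
proof -
  have pos: "exp x + exp (-x) > 0" by (simp add: add_pos_pos)
  have "((\<lambda>x. ln (exp x + exp (-x))) has_real_derivative (exp x - exp (-x)) / (exp x + exp (-x))) (at x)"
    using pos by (auto intro!: derivative_eq_intros)
  moreover have "(exp x - exp (-x)) / (exp x + exp (-x)) = tanh x"
    using pos by (simp add: tanh_def sinh_field_def cosh_field_def field_simps)
  ultimately show ?thesis by (simp add: rho_def[abs_def])
qed

lemma bij_betw_hypercube_Pow: "bij_betw (\<lambda>x. {i. i < n \<and> x i = 1}) (hypercube n) (Pow {..<n})"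
  by (rule bij_betw_byWitness[where f' = "\<lambda>S i. if i \<in> S then 1 else if i < n then -1 else 0"])
     (auto simp: hypercube_def fun_eq_iff split: if_splits)

lemma finite_hypercube [simp]: "finite (hypercube n)"
  using bij_betw_finite[OF bij_betw_hypercube_Pow] by simp

lemma card_hypercube: "card (hypercube n) = 2 ^ n"
  using bij_betw_same_card[OF bij_betw_hypercube_Pow] by (simp add: card_Pow)

lemma hypercube_square: "x \<in> hypercube n \<Longrightarrow> i < n \<Longrightarrow> x i * x i = 1"
  by (auto simp: hypercube_def)

lemma prod_hypercube_square:
  assumes "x \<in> hypercube n" and "T \<subseteq> {..<n}"
  shows "(\<Prod>i\<in>T. x i) * (\<Prod>i\<in>T. x i) = 1"
proof -
  have "(\<Prod>i\<in>T. x i) * (\<Prod>i\<in>T. x i) = (\<Prod>i\<in>T. x i * x i)"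
    by (simp add: prod.distrib)
  also have "\<dots> = 1"
    using assms by (intro prod.neutral) (auto simp: hypercube_square)
  finally show ?thesis .
qed

definition flip :: "nat \<Rightarrow> (nat \<Rightarrow> real) \<Rightarrow> nat \<Rightarrow> real" where
  "flip a x = x(a := - x a)"

lemma flip_in_hypercube: "a < n \<Longrightarrow> x \<in> hypercube n \<Longrightarrow> flip a x \<in> hypercube n"
  by (auto simp: hypercube_def flip_def)

lemma flip_flip [simp]: "flip a (flip a x) = x"
  by (simp add: flip_def)

lemma sum_hypercube_flip:
  "a < n \<Longrightarrow> (\<Sum>x\<in>hypercube n. F (flip a x)) = (\<Sum>x\<in>hypercube n. F x :: real)"
  by (rule sum.reindex_bij_witness[of _ "flip a" "flip a"]) (auto simp: flip_in_hypercube)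

lemma prod_flip:
  assumes "finite T"
  shows "(\<Prod>i\<in>T. flip a x i) = (if a \<in> T then - (\<Prod>i\<in>T. x i) else (\<Prod>i\<in>T. x i))"
proof (cases "a \<in> T")
  case True
  have "(\<Prod>i\<in>T-{a}. flip a x i) = (\<Prod>i\<in>T-{a}. x i)"
    by (rule prod.cong) (auto simp: flip_def)
  moreover have "flip a x a = - x a"
    by (simp add: flip_def)
  ultimately show ?thesis
    using True assms by (simp add: prod.remove)
qed (auto simp: flip_def intro!: prod.cong)

lemma orthogonal_characters:
  assumes S: "S \<subseteq> {..<n}" and T: "T \<subseteq> {..<n}"
  shows "(\<Sum>x\<in>hypercube n. (\<Prod>i\<in>S. x i) * (\<Prod>i\<in>T. x i)) = (if S = T then 2 ^ n else 0)"
proof (cases "S = T")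
  case True
  then have "(\<Sum>x\<in>hypercube n. (\<Prod>i\<in>S. x i) * (\<Prod>i\<in>T. x i)) = (\<Sum>x\<in>hypercube n. 1)"
    using T by (intro sum.cong) (auto simp: prod_hypercube_square)
  with True show ?thesis by (simp add: card_hypercube)
next
  case False
  then obtain a where a: "a \<in> S \<longleftrightarrow> a \<notin> T" by auto
  with S T have "a < n" by auto
  have fin: "finite S" "finite T" using S T finite_subset by auto
  let ?F = "\<lambda>x. (\<Prod>i\<in>S. x i) * (\<Prod>i\<in>T. x i)"
  have "(\<Sum>x\<in>hypercube n. ?F x) = (\<Sum>x\<in>hypercube n. ?F (flip a x))"
    using sum_hypercube_flip[OF \<open>a < n\<close>, of ?F] by simp
  also have "\<dots> = (\<Sum>x\<in>hypercube n. - ?F x)"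
    using a by (intro sum.cong) (auto simp: prod_flip[OF fin(1)] prod_flip[OF fin(2)])
  finally show ?thesis using False by (simp add: sum_negf)
qed

lemma orthogonal_points:
  assumes x: "x \<in> hypercube n" and y: "y \<in> hypercube n"
  shows "(\<Sum>T\<in>Pow {..<n}. (\<Prod>i\<in>T. x i) * (\<Prod>i\<in>T. y i)) = (if x = y then 2 ^ n else 0)"
proof -
  have "(\<Sum>T\<in>Pow {..<n}. (\<Prod>i\<in>T. x i) * (\<Prod>i\<in>T. y i))
      = (\<Sum>T\<in>Pow {..<n}. (\<Prod>i\<in>T. x i * y i) * (\<Prod>i\<in>{..<n}-T. 1))"
    by (simp add: prod.distrib)
  also have "\<dots> = (\<Prod>i<n. x i * y i + 1)"
    by (rule prod_add[symmetric]) simp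
  also have "\<dots> = (if x = y then 2 ^ n else 0)"
  proof (cases "x = y")
    case True
    then have "(\<Prod>i<n. x i * y i + 1) = (\<Prod>i<n. 2)"
      using hypercube_square[OF x] by (intro prod.cong) auto
    with True show ?thesis by simp
  next
    case False
    then obtain i where i: "x i \<noteq> y i" by (meson ext)
    have "i < n"
    proof (rule ccontr)
      assume "\<not> i < n"
      with x y have "x i = y i" by (simp add: hypercube_def)
      with i show False ..
    qed
    with x y have "x i = 1 \<or> x i = -1" "y i = 1 \<or> y i = -1"
      by (auto simp: hypercube_def)
    with i have "x i * y i + 1 = 0" by auto
    with \<open>i < n\<close> have "(\<Prod>i<n. x i * y i + 1) = 0"
      by (intro prod_zero) auto
    with False show ?thesis by simp
  qed
  finally show ?thesis .
qed

lemma hypercube_inversion: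
  assumes x: "x \<in> hypercube n"
  shows "(\<Sum>T\<in>Pow {..<n}. (\<Sum>y\<in>hypercube n. f y * (\<Prod>i\<in>T. y i)) / 2 ^ n * (\<Prod>i\<in>T. x i)) = f x"
proof -
  have "(\<Sum>T\<in>Pow {..<n}. (\<Sum>y\<in>hypercube n. f y * (\<Prod>i\<in>T. y i)) / 2 ^ n * (\<Prod>i\<in>T. x i))
      = (\<Sum>T\<in>Pow {..<n}. \<Sum>y\<in>hypercube n. f y / 2 ^ n * ((\<Prod>i\<in>T. x i) * (\<Prod>i\<in>T. y i)))"
    by (intro sum.cong) (simp_all add: sum_divide_distrib sum_distrib_left mult_ac)
  also have "\<dots> = (\<Sum>y\<in>hypercube n. f y / 2 ^ n * (\<Sum>T\<in>Pow {..<n}. (\<Prod>i\<in>T. x i) * (\<Prod>i\<in>T. y i)))"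
    by (subst sum.swap) (simp add: sum_distrib_left)
  also have "\<dots> = (\<Sum>y\<in>hypercube n. if y = x then f x else 0)"
    using x by (intro sum.cong) (auto simp: orthogonal_points)
  also have "\<dots> = f x"
    using x by simp
  finally show ?thesis .
qed

lemma hypercube_expansion_unique:
  assumes c: "\<forall>x\<in>hypercube n. f x = (\<Sum>T\<in>Pow {..<n}. c T * (\<Prod>i\<in>T. x i))"
    and S: "S \<subseteq> {..<n}"
  shows "c S = (\<Sum>x\<in>hypercube n. f x * (\<Prod>i\<in>S. x i)) / 2 ^ n"
proof -
  have "(\<Sum>x\<in>hypercube n. f x * (\<Prod>i\<in>S. x i))
      = (\<Sum>x\<in>hypercube n. \<Sum>T\<in>Pow {..<n}. c T * ((\<Prod>i\<in>T. x i) * (\<Prod>i\<in>S. x i)))"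
    using c by (intro sum.cong) (simp_all add: sum_distrib_left mult_ac)
  also have "\<dots> = (\<Sum>T\<in>Pow {..<n}. c T * (\<Sum>x\<in>hypercube n. (\<Prod>i\<in>T. x i) * (\<Prod>i\<in>S. x i)))"
    by (subst sum.swap) (simp add: sum_distrib_left)
  also have "\<dots> = (\<Sum>T\<in>Pow {..<n}. if T = S then c S * 2 ^ n else 0)"
    using S by (intro sum.cong) (auto simp: orthogonal_characters)
  also have "\<dots> = c S * 2 ^ n"
    using S by simp
  finally show ?thesis by simp
qed

lemma fourier_coeffs_eq:
  "fourier_coeffs n f T =
     (if T \<subseteq> {..<n} then (\<Sum>x\<in>hypercube n. f x * (\<Prod>i\<in>T. x i)) / 2 ^ n else 0)"
proof -
  let ?c = "\<lambda>T. if T \<subseteq> {..<n} then (\<Sum>x\<in>hypercube n. f x * (\<Prod>i\<in>T. x i)) / 2 ^ n else 0"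
  have "fourier_coeffs n f = ?c"
    unfolding fourier_coeffs_def
  proof (rule the_equality)
    show "(\<forall>T. \<not> T \<subseteq> {..<n} \<longrightarrow> ?c T = 0) \<and>
        (\<forall>x\<in>hypercube n. f x = (\<Sum>T\<in>Pow {..<n}. ?c T * (\<Prod>i\<in>T. x i)))"
      using hypercube_inversion[of _ n f] by (auto intro!: sum.cong)
  next
    fix c
    assume "(\<forall>T. \<not> T \<subseteq> {..<n} \<longrightarrow> c T = 0) \<and>
        (\<forall>x\<in>hypercube n. f x = (\<Sum>T\<in>Pow {..<n}. c T * (\<Prod>i\<in>T. x i)))"
    then show "c = ?c"
      using hypercube_expansion_unique[of n f c] by auto
  qed
  then show ?thesis by simp
qed

definition mixed_difference :: "nat \<Rightarrow> nat \<Rightarrow> ((nat \<Rightarrow> real) \<Rightarrow> real) \<Rightarrow> (nat \<Rightarrow> real) \<Rightarrow> real" where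
  "mixed_difference i j f x = f x - f (flip i x) - f (flip j x) + f (flip i (flip j x))"

lemma fourier_coeffs_pair:
  assumes ij: "i < n" "j < n" "i \<noteq> j"
  shows "fourier_coeffs n f {i, j} =
    (\<Sum>x\<in>hypercube n. x i * x j * mixed_difference i j f x) / (4 * 2 ^ n)"
proof -
  define A where "A = (\<Sum>x\<in>hypercube n. x i * x j * f x)"
  have flip_ij: "flip i x i = - x i" "flip i x j = x j" "flip j x j = - x j" "flip j x i = x i" for x
    using ij by (auto simp: flip_def)
  have flip_i: "(\<Sum>x\<in>hypercube n. x i * x j * f (flip i x)) = - A"
    using sum_hypercube_flip[OF ij(1), of "\<lambda>y. y i * y j * f (flip i y)"]
    by (simp add: A_def flip_ij sum_negf)
  have flip_j: "(\<Sum>x\<in>hypercube n. x i * x j * f (flip j x)) = - A"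
    using sum_hypercube_flip[OF ij(2), of "\<lambda>y. y i * y j * f (flip j y)"]
    by (simp add: A_def flip_ij sum_negf)
  have flip_ij_sum: "(\<Sum>x\<in>hypercube n. x i * x j * f (flip i (flip j x))) = A"
    using sum_hypercube_flip[OF ij(2), of "\<lambda>y. y i * y j * f (flip i y)"] flip_i
    by (simp add: flip_ij sum_negf)
  have "(\<Sum>x\<in>hypercube n. x i * x j * mixed_difference i j f x) = 4 * A"
    using flip_i flip_j flip_ij_sum
    by (simp add: A_def mixed_difference_def algebra_simps sum.distrib sum_subtractf)
  moreover have "fourier_coeffs n f {i, j} = A / 2 ^ n"
    using ij by (simp add: fourier_coeffs_eq A_def mult_ac)
  ultimately show ?thesis by simp
qed

lemma mixed_difference_add:
  "mixed_difference i j (\<lambda>x. f x + g x) x = mixed_difference i j f x + mixed_difference i j g x"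
  by (simp add: mixed_difference_def)

lemma mixed_difference_sum:
  "mixed_difference i j (\<lambda>x. \<Sum>k\<in>K. f k x) x = (\<Sum>k\<in>K. mixed_difference i j (f k) x)"
  by (simp add: mixed_difference_def sum.distrib sum_subtractf)

lemma sum_flip_mult:
  assumes "a < n"
  shows "(\<Sum>b<n. flip a x b * w b) = (\<Sum>b<n. x b * w b) - 2 * x a * w a"
proof -
  have "(\<Sum>b<n. flip a x b * w b) = (\<Sum>b<n. x b * w b + (if b = a then - 2 * x a * w a else 0))"
    by (intro sum.cong) (auto simp: flip_def)
  with assms show ?thesis by (simp add: sum.distrib)
qed

lemma flip_other: "b \<noteq> a \<Longrightarrow> flip a x b = x b"
  by (simp add: flip_def)

lemma mixed_difference_linear:
  assumes "i < n" "j < n" "i \<noteq> j"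
  shows "mixed_difference i j (\<lambda>x. \<Sum>a<n. x a * w a) x = 0"
  unfolding mixed_difference_def sum_flip_mult[OF assms(1)] sum_flip_mult[OF assms(2)]
  using assms by (simp add: flip_other)

lemma mixed_difference_ridge:
  assumes "i < n" "j < n" "i \<noteq> j"
  shows "mixed_difference i j (\<lambda>x. F ((\<Sum>a<n. x a * w a) + b)) x =
    second_difference F ((\<Sum>a<n. x a * w a) + b - x i * w i - x j * w j) (x i * w i) (x j * w j)"
  unfolding mixed_difference_def sum_flip_mult[OF assms(1)] sum_flip_mult[OF assms(2)]
  using assms by (simp add: second_difference_def flip_other algebra_simps)

theorem lemma5p2:
  fixes n m :: nat and J :: "nat \<Rightarrow> nat \<Rightarrow> real" and h :: "nat \<Rightarrow> real" and g :: "nat \<Rightarrow> real"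
    and i j :: nat
  assumes J_nonneg: "\<forall>a<n. \<forall>k<m. J a k \<ge> 0"
    and ij: "i < n" "j < n" "i \<noteq> j"
  defines "f \<equiv> (\<lambda>x::nat \<Rightarrow> real. (\<Sum>k<m. rho ((\<Sum>a<n. x a * J a k) + g k)) + (\<Sum>a<n. h a * x a))"
  shows "fourier_coeffs n f {i, j} \<ge> 0 \<and>
         ((\<exists>k<m. J i k > 0 \<and> J j k > 0) \<longrightarrow> fourier_coeffs n f {i, j} > 0)"
proof -
  define c where "c k x = (\<Sum>a<n. x a * J a k) + g k - x i * J i k - x j * J j k" for k x
  define D where "D x = (\<Sum>k<m. second_difference rho (c k x) (J i k) (J j k))" for x
  have "x i * x j * mixed_difference i j f x = D x" if "x \<in> hypercube n" for x
  proof -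
    have signs: "x i = 1 \<or> x i = -1" "x j = 1 \<or> x j = -1"
      using that ij by (auto simp: hypercube_def)
    have f_eq: "f = (\<lambda>x. (\<Sum>k<m. rho ((\<Sum>a<n. x a * J a k) + g k)) + (\<Sum>a<n. x a * h a))"
      by (simp add: f_def mult.commute)
    have "mixed_difference i j f x =
        (\<Sum>k<m. mixed_difference i j (\<lambda>x. rho ((\<Sum>a<n. x a * J a k) + g k)) x)"
      unfolding f_eq mixed_difference_add unfolding mixed_difference_linear[OF ij]
      by (simp add: mixed_difference_sum)
    moreover have "x i * x j * mixed_difference i j (\<lambda>x. rho ((\<Sum>a<n. x a * J a k) + g k)) x =
        second_difference rho (c k x) (J i k) (J j k)" for k
      using mixed_difference_ridge[OF ij, of rho "\<lambda>a. J a k" "g k" x]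
        second_difference_sign_flip[OF signs, of rho "c k x" "J i k" "J j k"]
      by (simp add: c_def)
    ultimately show ?thesis
      by (simp add: D_def sum_distrib_left)
  qed
  then have coeff: "fourier_coeffs n f {i, j} = (\<Sum>x\<in>hypercube n. D x) / (4 * 2 ^ n)"
    by (simp add: fourier_coeffs_pair[OF ij])
  have term_nonneg: "second_difference rho (c k x) (J i k) (J j k) \<ge> 0" if "k < m" for k x
    using J_nonneg ij that
    by (intro second_difference_nonneg[OF rho_has_real_derivative tanh_real_strict_mono]) auto
  show ?thesis
  proof
    show "fourier_coeffs n f {i, j} \<ge> 0"
      unfolding coeff D_def by (intro divide_nonneg_pos sum_nonneg term_nonneg) auto
  next
    show "(\<exists>k<m. J i k > 0 \<and> J j k > 0) \<longrightarrow> fourier_coeffs n f {i, j} > 0"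
    proof
      assume "\<exists>k<m. J i k > 0 \<and> J j k > 0"
      then obtain k where k: "k < m" "J i k > 0" "J j k > 0" by blast
      have "D x > 0" for x
        unfolding D_def using k term_nonneg
        by (intro sum_pos2[of _ k] second_difference_pos[OF rho_has_real_derivative tanh_real_strict_mono]) auto
      moreover have "hypercube n \<noteq> {}"
        using card_hypercube[of n] by auto
      ultimately have "(\<Sum>x\<in>hypercube n. D x) > 0"
        by (intro sum_pos) auto
      then show "fourier_coeffs n f {i, j} > 0"
        unfolding coeff by simp
    qed
  qed
qed

end
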